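(* Let $A_1=P(s_1,\dots,s_k)$ and $A_2=P(r_1,\dots,r_k)$ be non-ground, simple and covering atoms, each containing at least one compound term, and suppose $A_1$ and $A_2$ are unifiable. Then for every position $j\in\{1,\dots,k\}$, $s_j$ is a compound term if and only if $r_j$ is a compound term.
   Context: A compound term is a term that is neither a variable nor a constant. $\mathrm{Var}(E)$ denotes the set of variables of $E$. A literal is simple if each argument is a variable, a constant, or a term $f(u_1,\dots,u_n)$ with each $u_i$ a variable or a constant. A literal (or clause) $E$ is covering if every compound term $t$ occurring in $E$ satisfies $\mathrm{Var}(t)=\mathrm{Var}(E)$. *)

theory Defs
  imports Main
begin

text \<open>First-order terms over function symbols 'f and variables 'v.
  Constants are function symbols applied to the empty argument list.\<close>

datatype ('f, 'v) trm = Var 'v | Fn 'f "('f, 'v) trm list"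

datatype ('p, 'f, 'v) atom = Atom 'p "('f, 'v) trm list"

fun vars_trm :: "('f, 'v) trm \<Rightarrow> 'v set" where
  "vars_trm (Var x) = {x}"
| "vars_trm (Fn f ts) = (\<Union>t\<in>set ts. vars_trm t)"

fun subterms :: "('f, 'v) trm \<Rightarrow> ('f, 'v) trm set" where
  "subterms (Var x) = {Var x}"
| "subterms (Fn f ts) = insert (Fn f ts) (\<Union>t\<in>set ts. subterms t)"

fun subst_trm :: "('v \<Rightarrow> ('f, 'v) trm) \<Rightarrow> ('f, 'v) trm \<Rightarrow> ('f, 'v) trm" where
  "subst_trm \<sigma> (Var x) = \<sigma> x"
| "subst_trm \<sigma> (Fn f ts) = Fn f (map (subst_trm \<sigma>) ts)"

fun atom_args :: "('p, 'f, 'v) atom \<Rightarrow> ('f, 'v) trm list" where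
  "atom_args (Atom p ts) = ts"

fun subst_atom :: "('v \<Rightarrow> ('f, 'v) trm) \<Rightarrow> ('p, 'f, 'v) atom \<Rightarrow> ('p, 'f, 'v) atom" where
  "subst_atom \<sigma> (Atom p ts) = Atom p (map (subst_trm \<sigma>) ts)"

definition is_var :: "('f, 'v) trm \<Rightarrow> bool" where
  "is_var t \<longleftrightarrow> (\<exists>x. t = Var x)"

definition is_const :: "('f, 'v) trm \<Rightarrow> bool" where
  "is_const t \<longleftrightarrow> (\<exists>c. t = Fn c [])"

definition is_compound :: "('f, 'v) trm \<Rightarrow> bool" where
  "is_compound t \<longleftrightarrow> \<not> is_var t \<and> \<not> is_const t"

definition vars_atom :: "('p, 'f, 'v) atom \<Rightarrow> 'v set" where
  "vars_atom A = (\<Union>t\<in>set (atom_args A). vars_trm t)"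

definition subterms_atom :: "('p, 'f, 'v) atom \<Rightarrow> ('f, 'v) trm set" where
  "subterms_atom A = (\<Union>t\<in>set (atom_args A). subterms t)"

definition ground_atom :: "('p, 'f, 'v) atom \<Rightarrow> bool" where
  "ground_atom A \<longleftrightarrow> vars_atom A = {}"

definition simple_atom :: "('p, 'f, 'v) atom \<Rightarrow> bool" where
  "simple_atom A \<longleftrightarrow> (\<forall>t\<in>set (atom_args A).
      is_var t \<or> is_const t \<or>
      (\<exists>f us. t = Fn f us \<and> (\<forall>u\<in>set us. is_var u \<or> is_const u)))"

definition covering_atom :: "('p, 'f, 'v) atom \<Rightarrow> bool" where
  "covering_atom A \<longleftrightarrow> (\<forall>t\<in>subterms_atom A. is_compound t \<longrightarrow> vars_trm t = vars_atom A)"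

definition unifiable_atoms :: "('p, 'f, 'v) atom \<Rightarrow> ('p, 'f, 'v) atom \<Rightarrow> bool" where
  "unifiable_atoms A B \<longleftrightarrow> (\<exists>\<sigma>. subst_atom \<sigma> A = subst_atom \<sigma> B)"

end

theory Submission
  imports Defs
begin

text \<open>Suppose \<open>s\<^sub>j\<close> is compound but \<open>r\<^sub>j\<close> is not; since a compound term cannot unify with a
  constant, \<open>r\<^sub>j\<close> is a variable \<open>x\<close>. Let \<open>\<sigma>\<close> be a unifier and measure terms by their nesting depth,
  constants counting as depth 0. By simplicity and covering, every variable of \<open>A\<^sub>1\<close> is an argument
  of \<open>s\<^sub>j\<close>, so all of \<open>\<sigma>(A\<^sub>1)\<close> has depth at most \<open>D = depth(\<sigma> s\<^sub>j) = depth(\<sigma> x)\<close>. On the other hand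
  \<open>A\<^sub>2\<close> contains a compound argument \<open>r\<^sub>i\<close>, which by covering has \<open>x\<close> as an argument, so
  \<open>depth(\<sigma> r\<^sub>i) > D\<close>; but \<open>\<sigma> r\<^sub>i = \<sigma> s\<^sub>i\<close>, a contradiction.\<close>

fun depth :: "('f, 'v) trm \<Rightarrow> nat" where
  "depth (Var x) = 0"
| "depth (Fn f ts) = (if ts = [] then 0 else Suc (Max (depth ` set ts)))"

lemma depth_arg_less: "t \<in> set ts \<Longrightarrow> depth t < depth (Fn f ts)"
  by (auto simp: le_imp_less_Suc)

definition simple_trm :: "('f, 'v) trm \<Rightarrow> bool" where
  "simple_trm t \<longleftrightarrow> is_var t \<or> is_const t \<or>
     (\<exists>f us. t = Fn f us \<and> (\<forall>u\<in>set us. is_var u \<or> is_const u))"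

lemma simple_atom_iff: "simple_atom A \<longleftrightarrow> (\<forall>t\<in>set (atom_args A). simple_trm t)"
  by (simp add: simple_atom_def simple_trm_def)

lemma compound_simple_trmE:
  assumes "simple_trm t" "is_compound t"
  obtains f us where "t = Fn f us" "us \<noteq> []" "\<forall>u\<in>set us. is_var u \<or> is_const u"
  using assms by (auto simp: simple_trm_def is_compound_def is_const_def)

lemma var_arg_of_flat:
  assumes "\<forall>u\<in>set us. is_var u \<or> is_const u" "y \<in> vars_trm (Fn f us)"
  shows "Var y \<in> set us"
  using assms by (auto simp: is_var_def is_const_def)

lemma depth_subst_flat_var_less:
  assumes "\<forall>u\<in>set us. is_var u \<or> is_const u" "y \<in> vars_trm (Fn f us)"
  shows "depth (\<sigma> y) < depth (subst_trm \<sigma> (Fn f us))"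
proof -
  have "\<sigma> y \<in> set (map (subst_trm \<sigma>) us)"
    using var_arg_of_flat[OF assms] by force
  then have "depth (\<sigma> y) < depth (Fn f (map (subst_trm \<sigma>) us))"
    by (rule depth_arg_less)
  then show ?thesis by (simp only: subst_trm.simps)
qed

lemma depth_subst_simple_le:
  assumes "simple_trm s" "\<forall>y\<in>vars_trm s. depth (\<sigma> y) < D" "0 < D"
  shows "depth (subst_trm \<sigma> s) \<le> D"
proof -
  have arg: "depth (subst_trm \<sigma> u) < D" if "is_var u \<or> is_const u" "vars_trm u \<subseteq> vars_trm s" for u
    using that assms(2,3) by (auto simp: is_var_def is_const_def)
  from assms(1) consider "is_var s \<or> is_const s"
    | f us where "s = Fn f us" "\<forall>u\<in>set us. is_var u \<or> is_const u"
    by (auto simp: simple_trm_def)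
  then show ?thesis
  proof cases
    case 1
    then show ?thesis using arg[of s] by simp
  next
    case 2
    then have "\<forall>t\<in>set (map (subst_trm \<sigma>) us). depth t < D"
      using arg by auto
    then show ?thesis using 2 by (auto simp: Suc_le_eq)
  qed
qed

lemma subterms_atomic: "is_var u \<or> is_const u \<Longrightarrow> subterms u = {u}"
  by (auto simp: is_var_def is_const_def)

lemma compound_subterm_of_simple_trm:
  assumes "simple_trm r" "t \<in> subterms r" "is_compound t"
  shows "t = r"
  using assms subterms_atomic[of t] by (auto simp: simple_trm_def subterms_atomic is_compound_def)

lemma compound_subterm_of_simple_atom:
  assumes "simple_atom A" "t \<in> subterms_atom A" "is_compound t"
  shows "t \<in> set (atom_args A)"
  using assms compound_subterm_of_simple_trm
  by (fastforce simp: simple_atom_iff subterms_atom_def)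

lemma covering_arg_vars:
  assumes "covering_atom A" "t \<in> set (atom_args A)" "is_compound t"
  shows "vars_trm t = vars_atom A"
proof -
  have "t \<in> subterms t" by (cases t) auto
  then show ?thesis using assms by (auto simp: covering_atom_def subterms_atom_def)
qed

lemma unifier_preserves_compound_position:
  assumes len: "length ss = length rs"
    and simple_ss: "simple_atom (Atom P ss)" and simple_rs: "simple_atom (Atom P rs)"
    and cov_ss: "covering_atom (Atom P ss)" and cov_rs: "covering_atom (Atom P rs)"
    and compound_rs: "\<exists>t\<in>subterms_atom (Atom P rs). is_compound t"
    and unif: "map (subst_trm \<sigma>) ss = map (subst_trm \<sigma>) rs"
    and j: "j < length ss" and compound_sj: "is_compound (ss ! j)"
  shows "is_compound (rs ! j)"
proof (rule ccontr)
  assume "\<not> is_compound (rs ! j)"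
  have unif_nth: "subst_trm \<sigma> (ss ! i) = subst_trm \<sigma> (rs ! i)" if "i < length ss" for i
    using unif that len by (metis nth_map)
  have "simple_trm (ss ! j)" using simple_ss j by (simp add: simple_atom_iff)
  then obtain f us where sj: "ss ! j = Fn f us" "us \<noteq> []" "\<forall>u\<in>set us. is_var u \<or> is_const u"
    using compound_sj by (rule compound_simple_trmE)
  obtain x where rj: "rs ! j = Var x"
    using \<open>\<not> is_compound (rs ! j)\<close> unif_nth[OF j] sj(1,2)
    by (auto simp: is_compound_def is_var_def is_const_def)
  define D where "D = depth (\<sigma> x)"
  have D_eq: "D = depth (subst_trm \<sigma> (ss ! j))"
    using unif_nth[OF j] rj by (simp add: D_def)
  have vars_sj: "vars_trm (ss ! j) = vars_atom (Atom P ss)"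
    using covering_arg_vars[OF cov_ss _ compound_sj] j by simp
  have vars_ss_below: "depth (\<sigma> y) < D" if "y \<in> vars_atom (Atom P ss)" for y
    using depth_subst_flat_var_less[OF sj(3), of y f \<sigma>] that vars_sj sj(1) D_eq
    by (auto simp del: depth.simps)
  obtain r where r: "r \<in> set rs" "is_compound r"
    using compound_subterm_of_simple_atom[OF simple_rs] compound_rs by auto
  have "simple_trm r" using simple_rs r(1) by (simp add: simple_atom_iff)
  then obtain g vs where rg: "r = Fn g vs" "\<forall>u\<in>set vs. is_var u \<or> is_const u"
    using r(2) by (rule compound_simple_trmE)
  have "x \<in> vars_trm r"
    using covering_arg_vars[OF cov_rs _ r(2)] r(1) rj j len nth_mem[of j rs]
    by (force simp: vars_atom_def)
  then have D_less: "D < depth (subst_trm \<sigma> r)"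
    using depth_subst_flat_var_less[OF rg(2)] rg(1) by (simp add: D_def)
  obtain i where i: "i < length ss" "rs ! i = r"
    using r(1) len by (metis in_set_conv_nth)
  have "depth (subst_trm \<sigma> (ss ! i)) \<le> D"
  proof (rule depth_subst_simple_le)
    show "simple_trm (ss ! i)" using simple_ss i(1) by (simp add: simple_atom_iff)
    show "\<forall>y\<in>vars_trm (ss ! i). depth (\<sigma> y) < D"
      using vars_ss_below i(1) by (force simp: vars_atom_def)
    show "0 < D" using D_eq sj by simp
  qed
  then show False using D_less unif_nth[OF i(1)] i(2) by simp
qed

theorem mainTheorem4:
  fixes P :: 'p and ss rs :: "('f, 'v) trm list" and k :: nat
  assumes "length ss = k" and "length rs = k"
    and "\<not> ground_atom (Atom P ss)" and "\<not> ground_atom (Atom P rs)"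
    and "simple_atom (Atom P ss)" and "simple_atom (Atom P rs)"
    and "covering_atom (Atom P ss)" and "covering_atom (Atom P rs)"
    and "\<exists>t\<in>subterms_atom (Atom P ss). is_compound t"
    and "\<exists>t\<in>subterms_atom (Atom P rs). is_compound t"
    and "unifiable_atoms (Atom P ss) (Atom P rs)"
  shows "\<forall>j\<in>{1..k}. is_compound (ss ! (j - 1)) \<longleftrightarrow> is_compound (rs ! (j - 1))"
proof
  fix j assume "j \<in> {1..k}"
  then have j: "j - 1 < length ss" "j - 1 < length rs" using assms(1,2) by auto
  obtain \<sigma> where unif: "map (subst_trm \<sigma>) ss = map (subst_trm \<sigma>) rs"
    using assms(11) by (auto simp: unifiable_atoms_def)
  show "is_compound (ss ! (j - 1)) \<longleftrightarrow> is_compound (rs ! (j - 1))"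
    using unifier_preserves_compound_position[of ss rs P \<sigma> "j - 1"]
      unifier_preserves_compound_position[of rs ss P \<sigma> "j - 1"] assms unif j
    by (metis (no_types))
qed

end
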